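(* Let $G$ be a finite group such that the cyclic graph $\Delta(G)$ is connected and $\mathrm{diam}(\Delta(G))>6$. Then the center $Z(G)$ is trivial.
   Context: For a finite group $G$, the cyclic graph $\Delta(G)$ has vertex set $G^{\#}=G\setminus\{1\}$, and distinct vertices $x,y$ are adjacent if and only if the subgroup $\langle x,y\rangle$ is cyclic. The diameter is the maximum graph distance between two vertices. *)

theory Defs
  imports "HOL-Algebra.Algebra"
begin

definition cyc_vertices :: "('a, 'b) monoid_scheme \<Rightarrow> 'a set" where
  "cyc_vertices G = carrier G - {\<one>\<^bsub>G\<^esub>}"

definition cyc_adj :: "('a, 'b) monoid_scheme \<Rightarrow> 'a \<Rightarrow> 'a \<Rightarrow> bool" where
  "cyc_adj G x y \<longleftrightarrow> x \<in> cyc_vertices G \<and> y \<in> cyc_vertices G \<and> x \<noteq> y \<and>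
     cyclic_group (subgroup_generated G {x, y})"

inductive cyc_walk :: "('a, 'b) monoid_scheme \<Rightarrow> 'a \<Rightarrow> 'a \<Rightarrow> nat \<Rightarrow> bool" for G where
  nil: "x \<in> cyc_vertices G \<Longrightarrow> cyc_walk G x x 0"
| step: "cyc_adj G x y \<Longrightarrow> cyc_walk G y z n \<Longrightarrow> cyc_walk G x z (Suc n)"

definition cyc_connected :: "('a, 'b) monoid_scheme \<Rightarrow> bool" where
  "cyc_connected G \<longleftrightarrow> (\<forall>x \<in> cyc_vertices G. \<forall>y \<in> cyc_vertices G. \<exists>n. cyc_walk G x y n)"

text \<open>Graph distance (meaningful when the graph is connected).\<close>
definition cyc_dist :: "('a, 'b) monoid_scheme \<Rightarrow> 'a \<Rightarrow> 'a \<Rightarrow> nat" where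
  "cyc_dist G x y = (LEAST n. cyc_walk G x y n)"

definition cyc_diam :: "('a, 'b) monoid_scheme \<Rightarrow> nat" where
  "cyc_diam G = Max {cyc_dist G x y | x y. x \<in> cyc_vertices G \<and> y \<in> cyc_vertices G}"

definition group_center :: "('a, 'b) monoid_scheme \<Rightarrow> 'a set" where
  "group_center G = {z \<in> carrier G. \<forall>g \<in> carrier G. z \<otimes>\<^bsub>G\<^esub> g = g \<otimes>\<^bsub>G\<^esub> z}"

end

theory Submission
  imports Defs
begin

text \<open>
  A nontrivial centre contains an element \<open>z\<close> of prime order \<open>p\<close>, and every vertex \<open>g\<close> is
  within distance 3 of \<open>z\<close>. If \<open>p\<close> does not divide the order of \<open>g\<close>, then \<open>g\<close> and \<open>z\<close>
  commute and have coprime orders, so \<open>\<langle>g, z\<rangle> = \<langle>g z\<rangle>\<close> is cyclic. Otherwise \<open>g\<close> is adjacent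
  to the element \<open>\<omega> \<in> \<langle>g\<rangle>\<close> of order \<open>p\<close>. If \<open>z \<notin> \<langle>\<omega>\<rangle>\<close>, walk from \<open>\<omega>\<close> to \<open>z\<close> and stop
  at the first vertex \<open>d\<close> with \<open>\<omega> \<notin> \<langle>d\<rangle>\<close>. Its predecessor puts \<open>d\<close> and \<open>\<omega>\<close> into one cyclic
  group, which has only one subgroup of order \<open>p\<close>; hence \<open>p\<close> does not divide the order of \<open>d\<close>,
  and \<open>\<omega> - d - z\<close> is a path. So the diameter is at most 6.
\<close>

text \<open>In \<open>\<int>/N\<close>, any nonzero element killed by the prime \<open>p\<close> generates all such elements.\<close>

lemma prime_torsion_residue_multiple:
  fixes N i j p :: int
  assumes p: "Factorial_Ring.prime p" and i: "N dvd p * i" and j: "N dvd p * j" and nj: "\<not> N dvd j"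
  shows "\<exists>k. N dvd i - j * k"
proof -
  have "p dvd N"
  proof (rule ccontr)
    assume "\<not> p dvd N"
    then have "coprime N p" using p by (metis prime_imp_coprime coprime_commute)
    then show False using j nj by (simp add: coprime_dvd_mult_right_iff)
  qed
  then obtain M where N: "N = p * M" by blast
  have "p \<noteq> 0" using p by auto
  then obtain i' j' where i': "i = M * i'" and j': "j = M * j'"
    using i j unfolding N by (auto elim!: dvdE)
  have "\<not> p dvd j'" using nj unfolding N j' by simp
  then have "coprime p j'" using p by (simp add: prime_imp_coprime)
  then obtain u v where uv: "u * j' + v * p = 1"
    using bezout_int[of j' p] by (auto simp: coprime_iff_gcd_eq_1 gcd.commute)
  have "i - j * (u * i') = M * i' * (1 - u * j')"
    unfolding i' j' by (simp add: algebra_simps)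
  also have "1 - u * j' = v * p"
    using uv by simp
  also have "M * i' * (v * p) = N * (v * i')"
    unfolding N by (simp add: algebra_simps)
  finally show ?thesis by (metis dvd_triv_left)
qed

lemma cyc_walk_append: "cyc_walk G x y m \<Longrightarrow> cyc_walk G y z n \<Longrightarrow> cyc_walk G x z (m + n)"
  by (induction rule: cyc_walk.induct) (auto intro: cyc_walk.step)

lemma cyc_adj_sym: "cyc_adj G x y \<Longrightarrow> cyc_adj G y x"
  unfolding cyc_adj_def by (auto simp: insert_commute)

lemma cyc_walk_single: "cyc_adj G x y \<Longrightarrow> cyc_walk G x y 1"
  using cyc_walk.step[of G x y y 0] cyc_walk.nil[of y G] by (auto simp: cyc_adj_def)

lemma cyc_walk_sym: "cyc_walk G x y n \<Longrightarrow> cyc_walk G y x n"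
proof (induction rule: cyc_walk.induct)
  case (nil x)
  then show ?case by (rule cyc_walk.nil)
next
  case (step x y z n)
  then show ?case
    using cyc_walk_append[OF step.IH cyc_walk_single[OF cyc_adj_sym]] by simp
qed

lemma cyc_walk_crossing_edge:
  "cyc_walk G x y n \<Longrightarrow> P x \<Longrightarrow> \<not> P y \<Longrightarrow> \<exists>u v. cyc_adj G u v \<and> P u \<and> \<not> P v"
  by (induction rule: cyc_walk.induct) auto

lemma cyc_walk_le_1:
  "x \<in> cyc_vertices G \<Longrightarrow> (x \<noteq> y \<Longrightarrow> cyc_adj G x y) \<Longrightarrow> \<exists>k\<le>1. cyc_walk G x y k"
  by (metis cyc_walk.nil cyc_walk_single order_refl zero_le_one)

lemma cyc_walk_le_trans:
  "\<exists>a\<le>m. cyc_walk G x y a \<Longrightarrow> \<exists>b\<le>n. cyc_walk G y z b \<Longrightarrow> \<exists>k\<le>m + n. cyc_walk G x z k"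
  using cyc_walk_append add_mono by meson

lemma cyc_diam_le_twice_radius:
  assumes z: "z \<in> cyc_vertices G" and radius: "\<And>x. x \<in> cyc_vertices G \<Longrightarrow> \<exists>k\<le>r. cyc_walk G x z k"
  shows "cyc_diam G \<le> 2 * r"
proof -
  let ?D = "{cyc_dist G x y | x y. x \<in> cyc_vertices G \<and> y \<in> cyc_vertices G}"
  have dist: "cyc_dist G x y \<le> 2 * r" if x: "x \<in> cyc_vertices G" and y: "y \<in> cyc_vertices G" for x y
  proof -
    obtain a where "a \<le> r" "cyc_walk G x z a"
      using radius[OF x] by blast
    moreover obtain b where "b \<le> r" "cyc_walk G y z b"
      using radius[OF y] by blast
    ultimately have "cyc_walk G x y (a + b)" "a + b \<le> 2 * r"
      using cyc_walk_append[of G x z a y b] cyc_walk_sym[of G y z b] by auto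
    then show ?thesis
      unfolding cyc_dist_def by (meson Least_le le_trans)
  qed
  have D: "?D \<subseteq> {..2 * r}"
    using dist by blast
  show ?thesis
    unfolding cyc_diam_def
  proof (rule Max.boundedI)
    show "finite ?D"
      using D finite_subset by blast
    show "?D \<noteq> {}"
      using z by blast
  qed (use D in blast)
qed

context group
begin

abbreviation powers :: "'a \<Rightarrow> 'a set" where
  "powers c \<equiv> range (\<lambda>n::int. c [^] n)"

lemma powers_self: "c \<in> carrier G \<Longrightarrow> c \<in> powers c"
  by (metis int_pow_1 rangeI)

lemma nat_pow_in_powers: "c \<in> carrier G \<Longrightarrow> c [^] (k::nat) \<in> powers c"
  by (metis int_pow_int rangeI)

lemma powers_subset: "c \<in> carrier G \<Longrightarrow> x \<in> powers c \<Longrightarrow> powers x \<subseteq> powers c"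
  using int_pow_pow by auto

lemma powers_commute: "c \<in> carrier G \<Longrightarrow> x \<in> powers c \<Longrightarrow> y \<in> powers c \<Longrightarrow> x \<otimes> y = y \<otimes> x"
  by (auto simp flip: int_pow_mult simp: add.commute)

lemma ord_pow_ord_div:
  assumes "finite (carrier G)" "g \<in> carrier G" "d dvd ord g"
  shows "ord (g [^] (ord g div d)) = d"
proof -
  have "ord g \<noteq> 0" using ord_ge_1[OF assms(1,2)] by simp
  then show ?thesis using assms(2,3) ord_pow[of g "ord g div d"]
    by (metis dvd_div_eq_0_iff dvd_mult_div_cancel dvd_triv_right nonzero_mult_div_cancel_right)
qed

lemma in_powers_mult_if_coprime_ord:
  assumes a: "a \<in> carrier G" and b: "b \<in> carrier G" and ab: "a \<otimes> b = b \<otimes> a"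
    and "coprime (ord a) (ord b)"
  shows "a \<in> powers (a \<otimes> b)"
proof -
  obtain u v where uv: "u * int (ord b) + v * int (ord a) = 1"
    using \<open>coprime (ord a) (ord b)\<close>
    by (metis bezout_int coprime_iff_gcd_eq_1 gcd_int_int_eq gcd.commute of_nat_1)
  define k where "k = int (ord b) * u"
  have "(a \<otimes> b) [^] k = a [^] k \<otimes> b [^] k"
    using int_pow_mult_distrib[OF ab a b] .
  also have "b [^] k = \<one>"
    using int_pow_eq_id[OF b] by (simp add: k_def)
  also have "a [^] k = a [^] (1::int)"
    using int_pow_eq[OF a] uv by (simp add: k_def algebra_simps flip: uv)
  finally have "(a \<otimes> b) [^] k = a" using a by simp
  then show ?thesis by (metis rangeI)
qed

lemma prime_order_in_powers_of_prime_order: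
  assumes c: "c \<in> carrier G" and x: "x \<in> powers c" and y: "y \<in> powers c"
    and p: "Factorial_Ring.prime p" and ox: "ord x = p" and oy: "ord y = p"
  shows "x \<in> powers y"
proof -
  obtain i j :: int where i: "x = c [^] i" and j: "y = c [^] j" using x y by auto
  have "y \<noteq> \<one>"
    using oy p ord_eq_1 by force
  have "x [^] int p = \<one>" "y [^] int p = \<one>"
    using ox oy x y c by (auto simp: int_pow_eq_id)
  then have "int (ord c) dvd int p * i" "int (ord c) dvd int p * j"
    using c by (simp_all add: i j int_pow_pow int_pow_eq_id mult.commute)
  moreover have "\<not> int (ord c) dvd j"
    using c \<open>y \<noteq> \<one>\<close> by (simp add: j int_pow_eq_id)
  moreover have "Factorial_Ring.prime (int p)"
    using p by simp
  ultimately obtain k where "int (ord c) dvd i - j * k"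
    using prime_torsion_residue_multiple by blast
  then have "x = y [^] k"
    using c by (simp add: i j int_pow_pow int_pow_eq dvd_diff_commute)
  then show ?thesis by blast
qed

lemma cyclic_subgroup_generated_if_powers:
  assumes A: "A \<subseteq> carrier G" and c: "c \<in> generate G A" and Ac: "A \<subseteq> powers c"
  shows "cyclic_group (subgroup_generated G A)"
proof -
  have c_carrier: "c \<in> carrier G"
    using c generate_incl[OF A] by blast
  have "generate G A \<subseteq> powers c"
    using generate_subgroup_incl[OF Ac subgroup_of_powers[OF c_carrier]] .
  moreover have "powers c \<subseteq> generate G A"
    using subgroup_int_pow_closed[OF generate_is_subgroup[OF A] c] by auto
  ultimately have H: "carrier (subgroup_generated G A) = powers c"
    using A by (simp add: carrier_subgroup_generated Int_absorb1)
  have c_H: "c \<in> carrier (subgroup_generated G A)"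
    using H powers_self[OF c_carrier] by simp
  then have "carrier (subgroup_generated G A) = range (\<lambda>n::int. c [^]\<^bsub>subgroup_generated G A\<^esub> n)"
    using H int_pow_subgroup_generated[OF c_H] by simp
  then show ?thesis
    using c_H group.cyclic_group[OF group_subgroup_generated] by blast
qed

lemma cyclic_subgroup_generated_imp_powers:
  assumes cyc: "cyclic_group (subgroup_generated G A)" and A: "A \<subseteq> carrier G"
  obtains c where "c \<in> carrier G" "A \<subseteq> powers c"
proof -
  let ?H = "subgroup_generated G A"
  obtain c where c: "c \<in> carrier ?H" and H: "carrier ?H = range (\<lambda>n::int. c [^]\<^bsub>?H\<^esub> n)"
    using cyc group.cyclic_group[OF group_subgroup_generated] by blast
  have "carrier ?H = powers c"
    using H int_pow_subgroup_generated[OF c] by simp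
  moreover have "A \<subseteq> carrier ?H"
    using subgroup_generated_subset_carrier_subset[OF A] .
  moreover have "c \<in> carrier G"
    using c carrier_subgroup_generated_subset by blast
  ultimately show thesis using that by blast
qed

lemma cyc_adj_imp_common_powers:
  assumes "cyc_adj G x y"
  obtains c where "c \<in> carrier G" "x \<in> powers c" "y \<in> powers c"
proof -
  have "cyclic_group (subgroup_generated G {x, y})" "{x, y} \<subseteq> carrier G"
    using assms unfolding cyc_adj_def cyc_vertices_def by auto
  then obtain c where "c \<in> carrier G" "{x, y} \<subseteq> powers c"
    by (rule cyclic_subgroup_generated_imp_powers)
  then show thesis
    using that by simp
qed

lemma cyc_adj_if_in_powers:
  assumes "x \<in> cyc_vertices G" "y \<in> cyc_vertices G" "x \<noteq> y" "y \<in> powers x"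
  shows "cyc_adj G x y"
proof -
  have "x \<in> carrier G" using assms(1) by (simp add: cyc_vertices_def)
  then have "cyclic_group (subgroup_generated G {x, y})"
    using assms by (intro cyclic_subgroup_generated_if_powers[of _ x])
      (auto simp: cyc_vertices_def powers_self intro: generate.incl)
  then show ?thesis using assms by (simp add: cyc_adj_def)
qed

lemma cyc_adj_if_commute_coprime_ord:
  assumes x: "x \<in> cyc_vertices G" and y: "y \<in> cyc_vertices G"
    and xy: "x \<otimes> y = y \<otimes> x" and cp: "coprime (ord x) (ord y)"
  shows "cyc_adj G x y"
proof -
  have carrier: "x \<in> carrier G" "y \<in> carrier G" and "x \<noteq> \<one>"
    using x y by (auto simp: cyc_vertices_def)
  then have "x \<noteq> y"
    using cp ord_eq_1 by auto
  have "x \<in> powers (x \<otimes> y)"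
    using in_powers_mult_if_coprime_ord[OF carrier xy cp] .
  moreover have "y \<in> powers (x \<otimes> y)"
    using in_powers_mult_if_coprime_ord[of y x] carrier xy cp by (simp add: coprime_commute)
  moreover have "x \<otimes> y \<in> generate G {x, y}"
    by (simp add: generate.eng generate.incl)
  ultimately have "cyclic_group (subgroup_generated G {x, y})"
    using carrier by (intro cyclic_subgroup_generated_if_powers) auto
  then show ?thesis using x y \<open>x \<noteq> y\<close> by (simp add: cyc_adj_def)
qed

lemma cyc_adj_leaving_powers_coprime:
  assumes fin: "finite (carrier G)" and vu: "cyc_adj G v u"
    and \<omega>v: "\<omega> \<in> powers v" and \<omega>u: "\<omega> \<notin> powers u"
    and p: "Factorial_Ring.prime p" and \<omega>p: "ord \<omega> = p"
  shows "coprime (ord u) p" and "u \<otimes> \<omega> = \<omega> \<otimes> u"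
proof -
  obtain c where c: "c \<in> carrier G" "v \<in> powers c" "u \<in> powers c"
    using cyc_adj_imp_common_powers[OF vu] .
  have \<omega>c: "\<omega> \<in> powers c"
    using powers_subset[OF c(1,2)] \<omega>v by blast
  have u: "u \<in> carrier G"
    using c by auto
  show "u \<otimes> \<omega> = \<omega> \<otimes> u"
    using powers_commute[OF c(1,3) \<omega>c] .
  show "coprime (ord u) p"
  proof (rule ccontr)
    assume "\<not> coprime (ord u) p"
    then have "p dvd ord u"
      using p by (metis prime_imp_coprime coprime_commute)
    then have "ord (u [^] (ord u div p)) = p"
      using ord_pow_ord_div[OF fin u] by blast
    moreover have u'u: "u [^] (ord u div p) \<in> powers u"
      using nat_pow_in_powers[OF u] .
    then have "u [^] (ord u div p) \<in> powers c"
      using powers_subset[OF c(1,3)] by blast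
    ultimately have "\<omega> \<in> powers (u [^] (ord u div p))"
      using prime_order_in_powers_of_prime_order[OF c(1) \<omega>c _ p \<omega>p] by blast
    then show False
      using \<omega>u powers_subset[OF u u'u] by blast
  qed
qed

lemma prime_order_in_cyc_vertices:
  "x \<in> carrier G \<Longrightarrow> Factorial_Ring.prime (ord x) \<Longrightarrow> x \<in> cyc_vertices G"
  using ord_eq_1 not_prime_1 by (auto simp: cyc_vertices_def)

lemma cyc_walk_le_2_to_central_same_prime_order:
  assumes fin: "finite (carrier G)" and conn: "cyc_connected G"
    and z: "z \<in> group_center G" and p: "Factorial_Ring.prime (ord z)"
    and \<omega>c: "\<omega> \<in> carrier G" and \<omega>p: "ord \<omega> = ord z"
  shows "\<exists>k\<le>2. cyc_walk G \<omega> z k"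
proof -
  have zc: "z \<in> carrier G" and central: "\<And>h. h \<in> carrier G \<Longrightarrow> h \<otimes> z = z \<otimes> h"
    using z by (auto simp: group_center_def)
  have zv: "z \<in> cyc_vertices G" and \<omega>v: "\<omega> \<in> cyc_vertices G"
    using prime_order_in_cyc_vertices zc \<omega>c p \<omega>p by simp_all
  show ?thesis
  proof (cases "z \<in> powers \<omega>")
    case True
    then have "\<exists>k\<le>1. cyc_walk G \<omega> z k"
      using cyc_walk_le_1[OF \<omega>v] cyc_adj_if_in_powers[OF \<omega>v zv] by blast
    then show ?thesis
      by (meson le_trans one_le_numeral)
  next
    case False
    then have "\<omega> \<notin> powers z"
      using prime_order_in_powers_of_prime_order[OF zc powers_self[OF zc] _ p refl \<omega>p] by blast
    moreover obtain n where "cyc_walk G \<omega> z n"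
      using conn \<omega>v zv by (auto simp: cyc_connected_def)
    ultimately obtain u d where ud: "cyc_adj G u d" "\<omega> \<in> powers u" "\<omega> \<notin> powers d"
      using cyc_walk_crossing_edge[of G \<omega> z n "\<lambda>v. \<omega> \<in> powers v"] powers_self[OF \<omega>c] by blast
    have dv: "d \<in> cyc_vertices G" and dc: "d \<in> carrier G"
      using ud(1) by (auto simp: cyc_adj_def cyc_vertices_def)
    have d\<omega>: "coprime (ord d) (ord z)" "d \<otimes> \<omega> = \<omega> \<otimes> d"
      using cyc_adj_leaving_powers_coprime[OF fin ud p \<omega>p] by auto
    have "cyc_adj G \<omega> d"
      using cyc_adj_if_commute_coprime_ord[OF \<omega>v dv] d\<omega> \<omega>p by (simp add: coprime_commute)
    moreover have "cyc_adj G d z"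
      using cyc_adj_if_commute_coprime_ord[OF dv zv] d\<omega> central[OF dc] by simp
    ultimately have "cyc_walk G \<omega> z (1 + 1)"
      by (intro cyc_walk_append cyc_walk_single)
    then show ?thesis
      by (metis one_add_one order_refl)
  qed
qed

lemma cyc_walk_le_3_to_central_prime_order:
  assumes fin: "finite (carrier G)" and conn: "cyc_connected G"
    and z: "z \<in> group_center G" and p: "Factorial_Ring.prime (ord z)"
    and g: "g \<in> cyc_vertices G"
  shows "\<exists>k\<le>3. cyc_walk G g z k"
proof -
  have zc: "z \<in> carrier G" and central: "\<And>h. h \<in> carrier G \<Longrightarrow> h \<otimes> z = z \<otimes> h"
    using z by (auto simp: group_center_def)
  have gc: "g \<in> carrier G"
    using g by (simp add: cyc_vertices_def)
  consider "coprime (ord g) (ord z)" | "ord z dvd ord g"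
    using p by (metis prime_imp_coprime coprime_commute)
  then show ?thesis
  proof cases
    case 1
    then have "cyc_adj G g z"
      using cyc_adj_if_commute_coprime_ord[OF g prime_order_in_cyc_vertices[OF zc p]] central[OF gc]
      by simp
    then have "cyc_walk G g z 1"
      by (rule cyc_walk_single)
    then show ?thesis
      using one_le_numeral by blast
  next
    case 2
    define \<omega> where "\<omega> = g [^] (ord g div ord z)"
    have \<omega>g: "\<omega> \<in> powers g" and \<omega>p: "ord \<omega> = ord z"
      unfolding \<omega>_def using nat_pow_in_powers[OF gc] ord_pow_ord_div[OF fin gc 2] by simp_all
    have \<omega>c: "\<omega> \<in> carrier G"
      using \<omega>g gc by auto
    have "\<exists>k\<le>1. cyc_walk G g \<omega> k"
      using cyc_walk_le_1[OF g] cyc_adj_if_in_powers[OF g _ _ \<omega>g]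
        prime_order_in_cyc_vertices[OF \<omega>c] p \<omega>p by simp
    moreover have "\<exists>k\<le>2. cyc_walk G \<omega> z k"
      using cyc_walk_le_2_to_central_same_prime_order[OF fin conn z p \<omega>c \<omega>p] .
    ultimately have "\<exists>k\<le>1 + 2. cyc_walk G g z k"
      by (rule cyc_walk_le_trans)
    then show ?thesis
      by (simp add: numeral_3_eq_3)
  qed
qed

lemma group_center_prime_order:
  assumes fin: "finite (carrier G)" and nontrivial: "group_center G \<noteq> {\<one>}"
  obtains z where "z \<in> group_center G" "Factorial_Ring.prime (ord z)"
proof -
  have "\<one> \<in> group_center G"
    by (simp add: group_center_def)
  then obtain z0 where z0: "z0 \<in> group_center G" "z0 \<noteq> \<one>"
    using nontrivial by blast
  then have z0c: "z0 \<in> carrier G"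
    by (simp add: group_center_def)
  then have "ord z0 \<noteq> 1"
    using z0 ord_eq_1 by simp
  then obtain p where p: "Factorial_Ring.prime p" "p dvd ord z0"
    using prime_factor_nat by blast
  define z where "z = z0 [^] (ord z0 div p)"
  have "z \<in> group_center G"
    using z0 group_commutes_pow unfolding z_def group_center_def by auto
  moreover have "ord z = p"
    unfolding z_def using ord_pow_ord_div[OF fin z0c p(2)] .
  ultimately show thesis
    using that p by blast
qed

end

theorem lemma3p4:
  fixes G :: "('a, 'b) monoid_scheme"
  assumes "group G" and "finite (carrier G)"
    and "cyc_connected G" and "cyc_diam G > 6"
  shows "group_center G = {\<one>\<^bsub>G\<^esub>}"
proof (rule ccontr)
  interpret group G by fact
  assume "group_center G \<noteq> {\<one>\<^bsub>G\<^esub>}"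
  then obtain z where z: "z \<in> group_center G" "Factorial_Ring.prime (ord z)"
    using group_center_prime_order[OF assms(2)] by blast
  then have "z \<in> cyc_vertices G"
    by (intro prime_order_in_cyc_vertices) (simp_all add: group_center_def)
  then have "cyc_diam G \<le> 2 * 3"
    by (rule cyc_diam_le_twice_radius) (erule cyc_walk_le_3_to_central_prime_order[OF assms(2,3) z])
  with assms(4) show False
    by simp
qed

end
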